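(* For an algebra $\mathbf{A}$ the following are equivalent: (1) for all compatible reflexive relations $R,S,T$ of $\mathbf{A}$, $R\wedge(S\circ T)\subseteq(R\wedge S)\circ T$; (2) for all compatible reflexive relations $R,S,T$ of $\mathbf{A}$, $R\wedge(S\circ T)\subseteq(R\wedge S)\circ(R\wedge T)$.
   Context: $\wedge$ is intersection and $\circ$ is relational composition. A compatible reflexive relation of $\mathbf{A}$ is a reflexive subuniverse of $\mathbf{A}^2$. *)

theory Defs
  imports Main
begin

text \<open>An algebra is given by a carrier set A and a set of finitary basic operations,
  each operation being a pair (n, f) of its arity n and a function f on lists of length n.\<close>

definition is_algebra :: "'a set \<Rightarrow> (nat \<times> ('a list \<Rightarrow> 'a)) set \<Rightarrow> bool" where
  "is_algebra A F \<longleftrightarrow>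
     (\<forall>(n, f) \<in> F. \<forall>xs. length xs = n \<and> set xs \<subseteq> A \<longrightarrow> f xs \<in> A)"

definition compatible_rel :: "'a set \<Rightarrow> (nat \<times> ('a list \<Rightarrow> 'a)) set \<Rightarrow> 'a rel \<Rightarrow> bool" where
  "compatible_rel A F R \<longleftrightarrow> R \<subseteq> A \<times> A \<and>
     (\<forall>(n, f) \<in> F. \<forall>xs ys. length xs = n \<and> length ys = n \<and>
        list_all2 (\<lambda>x y. (x, y) \<in> R) xs ys \<longrightarrow> (f xs, f ys) \<in> R)"

definition compatible_refl_rel :: "'a set \<Rightarrow> (nat \<times> ('a list \<Rightarrow> 'a)) set \<Rightarrow> 'a rel \<Rightarrow> bool" where
  "compatible_refl_rel A F R \<longleftrightarrow> compatible_rel A F R \<and> refl_on A R"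

end

theory Submission
  imports Defs
begin

text \<open>Compatible reflexive relations are closed under converse and intersection. Applying
  the left inclusion to converses gives the mirrored inclusion
  \<open>R \<inter> (S O T) \<subseteq> S O (R \<inter> T)\<close>, and using the left inclusion first and then the mirrored one
  with \<open>R \<inter> S\<close> in place of \<open>S\<close> yields \<open>R \<inter> (S O T) \<subseteq> (R \<inter> S) O (R \<inter> T)\<close>. The converse
  implication is monotonicity of composition.\<close>

lemma compatible_rel_converse:
  assumes "compatible_rel A F R"
  shows "compatible_rel A F (R\<inverse>)"
proof -
  have "(f xs, f ys) \<in> R\<inverse>"
    if "(n, f) \<in> F" "length xs = n" "length ys = n" "list_all2 (\<lambda>x y. (x, y) \<in> R\<inverse>) xs ys"
    for n f xs ys
  proof -
    have "list_all2 (\<lambda>x y. (x, y) \<in> R) ys xs"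
      using that(4) by (simp add: list_all2_conv_all_nth)
    with assms that(1-3) show ?thesis
      unfolding compatible_rel_def by fastforce
  qed
  with assms show ?thesis
    unfolding compatible_rel_def by auto
qed

lemma compatible_rel_Int:
  assumes "compatible_rel A F R" "compatible_rel A F S"
  shows "compatible_rel A F (R \<inter> S)"
proof -
  have "(f xs, f ys) \<in> R \<inter> S"
    if "(n, f) \<in> F" "length xs = n" "length ys = n" "list_all2 (\<lambda>x y. (x, y) \<in> R \<inter> S) xs ys"
    for n f xs ys
  proof -
    have "list_all2 (\<lambda>x y. (x, y) \<in> R) xs ys" "list_all2 (\<lambda>x y. (x, y) \<in> S) xs ys"
      using that(4) by (simp_all add: list_all2_conv_all_nth)
    with assms that(1-3) show ?thesis
      unfolding compatible_rel_def by fastforce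
  qed
  with assms show ?thesis
    unfolding compatible_rel_def by auto
qed

lemma compatible_refl_rel_converse:
  "compatible_refl_rel A F R \<Longrightarrow> compatible_refl_rel A F (R\<inverse>)"
  unfolding compatible_refl_rel_def
  by (auto intro: compatible_rel_converse simp: refl_on_def)

lemma compatible_refl_rel_Int:
  "compatible_refl_rel A F R \<Longrightarrow> compatible_refl_rel A F S \<Longrightarrow> compatible_refl_rel A F (R \<inter> S)"
  unfolding compatible_refl_rel_def
  by (auto intro: compatible_rel_Int simp: refl_on_def)

lemma Int_relcomp_subset_right_if_left:
  assumes converse_closed: "\<And>R. P R \<Longrightarrow> P (R\<inverse>)"
    and left: "\<And>R S T. P R \<Longrightarrow> P S \<Longrightarrow> P T \<Longrightarrow> R \<inter> (S O T) \<subseteq> (R \<inter> S) O T"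
    and "P R" "P S" "P T"
  shows "R \<inter> (S O T) \<subseteq> S O (R \<inter> T)"
proof -
  have "R\<inverse> \<inter> (T\<inverse> O S\<inverse>) \<subseteq> (R\<inverse> \<inter> T\<inverse>) O S\<inverse>"
    using assms by blast
  then have "(R\<inverse> \<inter> (T\<inverse> O S\<inverse>))\<inverse> \<subseteq> ((R\<inverse> \<inter> T\<inverse>) O S\<inverse>)\<inverse>"
    by (rule converse_mono[THEN iffD2])
  then show ?thesis
    by (simp add: converse_relcomp converse_Int)
qed

lemma Int_relcomp_subset_both_if_left:
  assumes converse_closed: "\<And>R. P R \<Longrightarrow> P (R\<inverse>)"
    and Int_closed: "\<And>R S. P R \<Longrightarrow> P S \<Longrightarrow> P (R \<inter> S)"
    and left: "\<And>R S T. P R \<Longrightarrow> P S \<Longrightarrow> P T \<Longrightarrow> R \<inter> (S O T) \<subseteq> (R \<inter> S) O T"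
    and "P R" "P S" "P T"
  shows "R \<inter> (S O T) \<subseteq> (R \<inter> S) O (R \<inter> T)"
proof -
  have "R \<inter> (S O T) \<subseteq> R \<inter> ((R \<inter> S) O T)"
    using left[OF \<open>P R\<close> \<open>P S\<close> \<open>P T\<close>] by blast
  also have "\<dots> \<subseteq> (R \<inter> S) O (R \<inter> T)"
    by (rule Int_relcomp_subset_right_if_left[where P = P, OF converse_closed left])
      (use assms(4-6) Int_closed in auto)
  finally show ?thesis .
qed

theorem theorem5p3:
  fixes A :: "'a set" and F :: "(nat \<times> ('a list \<Rightarrow> 'a)) set"
  assumes "is_algebra A F"
  shows "(\<forall>R S T. compatible_refl_rel A F R \<and> compatible_refl_rel A F S \<and> compatible_refl_rel A F T
            \<longrightarrow> R \<inter> (S O T) \<subseteq> (R \<inter> S) O T)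
     \<longleftrightarrow> (\<forall>R S T. compatible_refl_rel A F R \<and> compatible_refl_rel A F S \<and> compatible_refl_rel A F T
            \<longrightarrow> R \<inter> (S O T) \<subseteq> (R \<inter> S) O (R \<inter> T))"
proof (intro iffI allI impI; elim conjE)
  fix R S T
  assume "\<forall>R S T. compatible_refl_rel A F R \<and> compatible_refl_rel A F S \<and> compatible_refl_rel A F T
            \<longrightarrow> R \<inter> (S O T) \<subseteq> (R \<inter> S) O T"
    and "compatible_refl_rel A F R" "compatible_refl_rel A F S" "compatible_refl_rel A F T"
  then show "R \<inter> (S O T) \<subseteq> (R \<inter> S) O (R \<inter> T)"
    by (intro Int_relcomp_subset_both_if_left[where P = "compatible_refl_rel A F"])
      (simp_all add: compatible_refl_rel_converse compatible_refl_rel_Int)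
next
  fix R S T
  assume "\<forall>R S T. compatible_refl_rel A F R \<and> compatible_refl_rel A F S \<and> compatible_refl_rel A F T
            \<longrightarrow> R \<inter> (S O T) \<subseteq> (R \<inter> S) O (R \<inter> T)"
    and "compatible_refl_rel A F R" "compatible_refl_rel A F S" "compatible_refl_rel A F T"
  then have "R \<inter> (S O T) \<subseteq> (R \<inter> S) O (R \<inter> T)"
    by blast
  also have "\<dots> \<subseteq> (R \<inter> S) O T"
    by (intro relcomp_mono) auto
  finally show "R \<inter> (S O T) \<subseteq> (R \<inter> S) O T" .
qed

end
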